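(* Let $S$ be an additively reduced semidomain and $G$ a torsion-free abelian group. If a nonzero $f=\sum_{i=0}^\infty s_ix^{g_i}\in S[\![G]\!]$ satisfies $g_1-g_0<g_{i+1}-g_i$ for every $i\in\mathbb{N}$ (i.e. every $i\ge1$), then $f$ is monolithic.
   Context: A semidomain is a subsemiring (containing $0$ and $1$) of an integral domain. $S$ is additively reduced if $0$ is the only invertible element of $(S,+)$. $G$ carries a fixed total order compatible with addition. $S[\![G]\!]=\{\sum_{i=0}^\infty s_ix^{g_i} : s_i\in S,\ g_i\in G,\ g_i<g_{i+1}\}$ with operations defined as for polynomials; elements are written so that $s_i=0$ implies $s_{i+1}=0$; $\operatorname{supp}(f)=\{g_i: s_i\neq0\}$. A nonzero $f$ is monolithic if $f=pq$ with $p,q\in S[\![G]\!]$ implies one of $p,q$ is a monomial $sx^g$. *)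

theory Defs
  imports Main
begin

definition semidomain :: "'a::idom set \<Rightarrow> bool" where
  "semidomain S \<longleftrightarrow> 0 \<in> S \<and> 1 \<in> S \<and>
     (\<forall>a\<in>S. \<forall>b\<in>S. a + b \<in> S) \<and> (\<forall>a\<in>S. \<forall>b\<in>S. a * b \<in> S)"

definition add_reduced :: "'a::idom set \<Rightarrow> bool" where
  "add_reduced S \<longleftrightarrow> (\<forall>a\<in>S. (\<exists>b\<in>S. a + b = 0) \<longrightarrow> a = 0)"

text \<open>The formal sum  sum_i s_i x^(g_i)  (g strictly increasing), as its coefficient function.\<close>
definition series_of :: "(nat \<Rightarrow> 'a::zero) \<Rightarrow> (nat \<Rightarrow> 'g) \<Rightarrow> 'g \<Rightarrow> 'a" where
  "series_of s g = (\<lambda>h. if \<exists>i. g i = h then s (THE i. g i = h) else 0)"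

definition series_set :: "'a::idom set \<Rightarrow> ('g::linordered_ab_group_add \<Rightarrow> 'a) set" where
  "series_set S = {series_of s g | s g. (\<forall>i. s i \<in> S) \<and> strict_mono g \<and>
                      (\<forall>i. s i = 0 \<longrightarrow> s (Suc i) = 0)}"

definition series_mult :: "('g::linordered_ab_group_add \<Rightarrow> 'a::idom) \<Rightarrow> ('g \<Rightarrow> 'a) \<Rightarrow> 'g \<Rightarrow> 'a" where
  "series_mult p q = (\<lambda>h. \<Sum>(a,b)\<in>{(a,b). a + b = h \<and> p a \<noteq> 0 \<and> q b \<noteq> 0}. p a * q b)"

definition monomial_in :: "'a::idom set \<Rightarrow> ('g \<Rightarrow> 'a) \<Rightarrow> bool" where
  "monomial_in S p \<longleftrightarrow> (\<exists>c\<in>S. \<exists>g0. p = (\<lambda>h. if h = g0 then c else 0))"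

definition monolithic :: "'a::idom set \<Rightarrow> ('g::linordered_ab_group_add \<Rightarrow> 'a) \<Rightarrow> bool" where
  "monolithic S f \<longleftrightarrow> f \<noteq> (\<lambda>_. 0) \<and>
     (\<forall>p\<in>series_set S. \<forall>q\<in>series_set S. f = series_mult p q \<longrightarrow>
        monomial_in S p \<or> monomial_in S q)"

end

(*
  Suppose f = p q with neither factor a monomial, let u0 < u1 be the two least exponents of p
  and v0 < v1 those of q, and say u1 - u0 <= v1 - v0. Since S is additively reduced, no
  coefficient of p q cancels, so supp f = supp p + supp q. Its two least elements are then
  u0 + v0 and u1 + v0, hence g 1 - g 0 = u1 - u0. But u0 + v1 < u1 + v1 are two later exponents
  g k < g m of f that differ by the same amount u1 - u0, whereas already the gap after g k
  exceeds g 1 - g 0.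
*)
theory Submission
  imports Defs "HOL-Library.Set_Algebras"
begin

definition supp :: "('g \<Rightarrow> 'a::zero) \<Rightarrow> 'g set" where
  "supp f = {x. f x \<noteq> 0}"

definition least_two :: "'a::linorder set \<Rightarrow> 'a \<Rightarrow> 'a \<Rightarrow> bool" where
  "least_two A x y \<longleftrightarrow> x \<in> A \<and> y \<in> A \<and> x < y \<and> (\<forall>z\<in>A. z \<noteq> x \<longrightarrow> y \<le> z)"

lemma least_two_least: "least_two A x y \<Longrightarrow> z \<in> A \<Longrightarrow> x \<le> z"
  unfolding least_two_def by force

lemma sumset_least_two:
  fixes u0 :: "'g::linordered_ab_group_add"
  assumes P: "least_two P u0 u1" and Q: "least_two Q v0 v1" and d: "u1 - u0 \<le> v1 - v0"
  shows "least_two (P + Q) (u0 + v0) (u1 + v0)"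
  unfolding least_two_def
proof (intro conjI ballI impI)
  show "u0 + v0 \<in> P + Q" "u1 + v0 \<in> P + Q"
    using P Q by (auto simp: least_two_def)
  show "u0 + v0 < u1 + v0" using P by (simp add: least_two_def)
  fix z assume "z \<in> P + Q" and z: "z \<noteq> u0 + v0"
  then obtain a b where ab: "a \<in> P" "b \<in> Q" "z = a + b" by (auto elim: set_plus_elim)
  have a: "u0 \<le> a" and b: "v0 \<le> b"
    using ab least_two_least P Q by blast+
  show "u1 + v0 \<le> z"
  proof (cases "a = u0")
    case True
    then have "v1 \<le> b" using ab z Q by (auto simp: least_two_def)
    have "u1 + v0 \<le> u0 + v1" using d by (simp add: algebra_simps)
    also have "\<dots> \<le> z" using \<open>v1 \<le> b\<close> True ab by simp
    finally show ?thesis .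
  next
    case False
    then have "u1 \<le> a" using ab P by (auto simp: least_two_def)
    then show ?thesis using b ab by (simp add: add_mono)
  qed
qed

lemma nonzero_if_le:
  assumes zeros: "\<forall>i. s i = 0 \<longrightarrow> s (Suc i) = 0" and "s i \<noteq> 0" and "j \<le> i"
  shows "s j \<noteq> 0"
  using assms(3,2) by (induction rule: inc_induct) (use zeros in auto)

lemma series_of_at:
  assumes "strict_mono g"
  shows "series_of s g (g i) = s i"
  using strict_mono_eq[OF assms] by (simp add: series_of_def)

lemma supp_series_of:
  assumes "strict_mono g"
  shows "supp (series_of s g) = g ` {i. s i \<noteq> 0}"
proof (rule set_eqI)
  fix x
  show "x \<in> supp (series_of s g) \<longleftrightarrow> x \<in> g ` {i. s i \<noteq> 0}"
  proof (cases "x \<in> range g")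
    case True
    then obtain i where "x = g i" by blast
    then show ?thesis by (auto simp: supp_def series_of_at[OF assms] strict_mono_eq[OF assms])
  next
    case False
    then show ?thesis by (auto simp: supp_def series_of_def)
  qed
qed

lemma least_two_supp_series_of_iff:
  assumes g: "strict_mono g" and zeros: "\<forall>i. s i = 0 \<longrightarrow> s (Suc i) = 0"
  shows "least_two (supp (series_of s g)) x y \<longleftrightarrow> s 1 \<noteq> 0 \<and> x = g 0 \<and> y = g 1"
proof
  assume two: "least_two (supp (series_of s g)) x y"
  then obtain i j where i: "x = g i" "s i \<noteq> 0" and j: "y = g j" "s j \<noteq> 0"
    by (auto simp: least_two_def supp_series_of[OF g])
  have "s 0 \<noteq> 0" using nonzero_if_le[OF zeros i(2)] by simp
  then have "x \<le> g 0" using two by (auto simp: least_two_def supp_series_of[OF g])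
  then have x: "x = g 0"
    using i g by (metis antisym le0 strict_mono_less_eq)
  then have "j \<noteq> 0" using two j by (auto simp: least_two_def)
  then have s1: "s 1 \<noteq> 0" using nonzero_if_le[OF zeros j(2)] by simp
  then have "y \<le> g 1" using two x g by (auto simp: least_two_def supp_series_of[OF g] strict_mono_eq)
  moreover have "g 1 \<le> y" using j \<open>j \<noteq> 0\<close> g by (simp add: strict_mono_less_eq)
  ultimately show "s 1 \<noteq> 0 \<and> x = g 0 \<and> y = g 1" using s1 x by simp
next
  assume "s 1 \<noteq> 0 \<and> x = g 0 \<and> y = g 1"
  moreover have "g 1 \<le> g i" if "g i \<noteq> g 0" for i
    using g that by (metis One_nat_def Suc_leI gr0I strict_mono_less_eq)
  ultimately show "least_two (supp (series_of s g)) x y"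
    using nonzero_if_le[OF zeros] g
    by (auto simp: least_two_def supp_series_of[OF g] strict_mono_less)
qed

lemma sum_in_semidomain:
  assumes "semidomain S" and "\<forall>x\<in>A. f x \<in> S"
  shows "sum f A \<in> S"
  using assms(2)
proof (induction A rule: infinite_finite_induct)
  case (insert x A)
  then show ?case using assms(1) by (simp add: semidomain_def)
qed (use assms(1) in \<open>simp_all add: semidomain_def\<close>)

lemma sum_nonzero_add_reduced:
  assumes S: "semidomain S" "add_reduced S" and "finite A" "A \<noteq> {}"
    and "\<forall>x\<in>A. f x \<in> S \<and> f x \<noteq> 0"
  shows "sum f A \<noteq> 0"
  using assms(3-5)
proof (induction A rule: finite_ne_induct)
  case (insert x A)
  have "\<forall>y\<in>A. f y \<in> S" using insert.prems by simp
  then have "sum f A \<in> S" by (rule sum_in_semidomain[OF S(1)])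
  then show ?case
    using insert S(2) unfolding add_reduced_def by auto
qed simp

text \<open>Without this, the sum defining \<^const>\<open>series_mult\<close> could range over an infinite set
  and silently be 0.\<close>

lemma finite_sum_decompositions:
  fixes u w :: "nat \<Rightarrow> 'g::linordered_ab_group_add"
  assumes u: "strict_mono u" and w: "strict_mono w"
  shows "finite {(x, y). x + y = h \<and> x \<in> range u \<and> y \<in> range w}" (is "finite ?X")
proof (cases "?X = {}")
  case False
  then obtain i0 j0 where ij: "u i0 + w j0 = h" by blast
  have "?X \<subseteq> (\<lambda>x. (x, h - x)) ` u ` {..i0} \<union> (\<lambda>y. (h - y, y)) ` w ` {..j0}"
  proof
    fix z assume "z \<in> ?X"
    then obtain i j where z: "z = (u i, w j)" and h: "u i + w j = h" by blast
    show "z \<in> (\<lambda>x. (x, h - x)) ` u ` {..i0} \<union> (\<lambda>y. (h - y, y)) ` w ` {..j0}"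
    proof (cases "i \<le> i0")
      case True
      then show ?thesis using z h by (auto simp: eq_diff_eq)
    next
      case False
      then have "u i0 < u i" using u by (simp add: strict_mono_less)
      then have "w j < w j0" using h ij by (metis add_less_cancel_right add_less_imp_less_left)
      then have "j \<le> j0" using w by (simp add: strict_mono_less)
      then show ?thesis using z h by (auto simp: eq_diff_eq add.commute)
    qed
  qed
  then show ?thesis by (rule finite_subset) simp
next
  case True
  show ?thesis unfolding True by simp
qed

lemma series_of_in:
  assumes "0 \<in> S" and "\<forall>i. s i \<in> S"
  shows "series_of s g h \<in> S"
  using assms by (simp add: series_of_def)

lemma supp_series_mult:
  assumes S: "semidomain S" "add_reduced S" and p: "p \<in> series_set S" and q: "q \<in> series_set S"
  shows "supp (series_mult p q) = supp p + supp q"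
proof -
  have "0 \<in> S" using S(1) by (simp add: semidomain_def)
  obtain a u where pa: "p = series_of a u" and aS: "\<forall>i. a i \<in> S" and u: "strict_mono u"
    using p unfolding series_set_def by blast
  obtain b w where qb: "q = series_of b w" and bS: "\<forall>i. b i \<in> S" and w: "strict_mono w"
    using q unfolding series_set_def by blast
  have pS: "p x \<in> S" and qS: "q x \<in> S" for x
    using series_of_in[OF \<open>0 \<in> S\<close> aS] series_of_in[OF \<open>0 \<in> S\<close> bS] pa qb by simp_all
  have "series_mult p q h \<noteq> 0 \<longleftrightarrow> (\<exists>x y. x + y = h \<and> p x \<noteq> 0 \<and> q y \<noteq> 0)" for h
  proof -
    let ?D = "{(x, y). x + y = h \<and> p x \<noteq> 0 \<and> q y \<noteq> 0}"
    have "supp p \<subseteq> range u" "supp q \<subseteq> range w"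
      using supp_series_of[OF u, of a] supp_series_of[OF w, of b] pa qb by auto
    then have "?D \<subseteq> {(x, y). x + y = h \<and> x \<in> range u \<and> y \<in> range w}"
      by (auto simp: supp_def)
    then have "finite ?D" using finite_sum_decompositions[OF u w] by (rule finite_subset)
    moreover have "\<forall>z\<in>?D. (\<lambda>(x, y). p x * q y) z \<in> S \<and> (\<lambda>(x, y). p x * q y) z \<noteq> 0"
      using S(1) pS qS by (auto simp: semidomain_def)
    ultimately have "series_mult p q h \<noteq> 0" if "?D \<noteq> {}"
      unfolding series_mult_def using sum_nonzero_add_reduced[OF S _ that] by blast
    moreover have "series_mult p q h = 0" if "?D = {}"
      unfolding series_mult_def that by (rule sum.empty)
    ultimately have "series_mult p q h \<noteq> 0 \<longleftrightarrow> ?D \<noteq> {}" by blast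
    then show ?thesis by auto
  qed
  then show ?thesis by (auto simp: supp_def set_plus_def)
qed

lemma least_two_supp_if_not_monomial:
  assumes "0 \<in> S" and p: "p \<in> series_set S" and "\<not> monomial_in S p"
  obtains u0 u1 where "least_two (supp p) u0 u1"
proof -
  obtain a u where pa: "p = series_of a u" and aS: "\<forall>i. a i \<in> S" and u: "strict_mono u"
    and zeros: "\<forall>i. a i = 0 \<longrightarrow> a (Suc i) = 0"
    using p unfolding series_set_def by blast
  have "a 1 \<noteq> 0"
  proof
    assume "a 1 = 0"
    have "p = (\<lambda>h. if h = u 0 then a 0 else 0)"
    proof
      fix h
      have "h = u 0" if "p h \<noteq> 0"
      proof -
        have "h \<in> supp p" using that by (simp add: supp_def)
        then have "h \<in> u ` {i. a i \<noteq> 0}" by (simp add: pa supp_series_of[OF u])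
        then obtain i where i: "h = u i" "a i \<noteq> 0" by blast
        then have "i = 0" using nonzero_if_le[OF zeros, of i 1] \<open>a 1 = 0\<close> by linarith
        then show ?thesis using i by simp
      qed
      then show "p h = (if h = u 0 then a 0 else 0)"
        using pa series_of_at[OF u, of a 0] by auto
    qed
    then show False using assms aS unfolding monomial_in_def by blast
  qed
  then show thesis
    using that least_two_supp_series_of_iff[OF u zeros] pa by blast
qed

lemma gapped_series_supp_not_sumset:
  fixes g :: "nat \<Rightarrow> 'g::linordered_ab_group_add"
  assumes g: "strict_mono g" and zeros: "\<forall>i. s i = 0 \<longrightarrow> s (Suc i) = 0"
    and gap: "\<forall>i\<ge>1. g 1 - g 0 < g (Suc i) - g i"
    and supp_eq: "supp (series_of s g) = P + Q"
    and P: "least_two P u0 u1" and Q: "least_two Q v0 v1" and d: "u1 - u0 \<le> v1 - v0"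
  shows False
proof -
  have "least_two (supp (series_of s g)) (u0 + v0) (u1 + v0)"
    using sumset_least_two[OF P Q d] supp_eq by simp
  then have g0: "g 0 = u0 + v0" and g1: "g 1 = u1 + v0"
    using least_two_supp_series_of_iff[OF g zeros] by auto
  have "u0 + v1 \<in> P + Q" "u1 + v1 \<in> P + Q"
    using P Q by (auto simp: least_two_def)
  then obtain k m where k: "g k = u0 + v1" and m: "g m = u1 + v1"
    using supp_eq supp_series_of[OF g] by (metis (no_types, lifting) imageE)
  have "g 0 < g k" using g0 k Q by (simp add: least_two_def)
  then have "1 \<le> k" using g by (simp add: strict_mono_less)
  have "g k < g m" using k m P by (simp add: least_two_def)
  then have "Suc k \<le> m" using g by (simp add: strict_mono_less)
  have "g 1 - g 0 < g (Suc k) - g k" using gap \<open>1 \<le> k\<close> by blast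
  also have "\<dots> \<le> g m - g k" using \<open>Suc k \<le> m\<close> g by (simp add: strict_mono_less_eq)
  also have "\<dots> = g 1 - g 0" using g0 g1 k m by (simp add: algebra_simps)
  finally show False by simp
qed

theorem lemma4p2:
  fixes S :: "'a::idom set" and s :: "nat \<Rightarrow> 'a" and g :: "nat \<Rightarrow> 'g::linordered_ab_group_add"
  assumes "semidomain S" and "add_reduced S"
    and "\<forall>i. s i \<in> S" and "strict_mono g" and "\<forall>i. s i = 0 \<longrightarrow> s (Suc i) = 0"
    and "series_of s g \<noteq> (\<lambda>_. 0)"
    and "\<forall>i\<ge>1. g 1 - g 0 < g (Suc i) - g i"
  shows "monolithic S (series_of s g)"
  unfolding monolithic_def
proof (intro conjI ballI impI)
  show "series_of s g \<noteq> (\<lambda>_. 0)" by fact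
  fix p q
  assume p: "p \<in> series_set S" and q: "q \<in> series_set S" and f: "series_of s g = series_mult p q"
  have "0 \<in> S" using assms(1) by (simp add: semidomain_def)
  show "monomial_in S p \<or> monomial_in S q"
  proof (rule ccontr)
    assume "\<not> ?thesis"
    then obtain u0 u1 v0 v1 where P: "least_two (supp p) u0 u1" and Q: "least_two (supp q) v0 v1"
      using least_two_supp_if_not_monomial[OF \<open>0 \<in> S\<close>] p q by metis
    have PQ: "supp (series_of s g) = supp p + supp q"
      using supp_series_mult[OF assms(1,2) p q] f by simp
    then have QP: "supp (series_of s g) = supp q + supp p"
      by (simp add: add.commute)
    consider "u1 - u0 \<le> v1 - v0" | "v1 - v0 \<le> u1 - u0" using linear by blast
    then show False
    proof cases
      case 1
      show False by (rule gapped_series_supp_not_sumset[OF assms(4,5,7) PQ P Q 1])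
    next
      case 2
      show False by (rule gapped_series_supp_not_sumset[OF assms(4,5,7) QP Q P 2])
    qed
  qed
qed

end
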